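(* Assume that $\mathfrak{c} = 2^{<\mathfrak{c}}$ and that $\mathfrak{c}$ is a regular cardinal, where $\mathfrak{c}=|\mathbb{R}|$. Then there are $2^{2^{\mathfrak{c}}}$ many $\sigma$-algebras on $\mathbb{R}$ that contain $[\mathbb{R}]^{\leq\omega}$ and none of them is equal to $\mathcal{B}_f(\mathbb{R})$ for any two-point selection $f$ on $\mathbb{R}$.
   Context: $[\mathbb{R}]^{\leq\omega}$ is the family of all countable subsets of $\mathbb{R}$; $2^{<\mathfrak{c}} = \sup\{2^\lambda : \lambda<\mathfrak{c}\ \text{a cardinal}\}$. A two-point selection on $\mathbb{R}$ is a function $f$ from the set of two-element subsets of $\mathbb{R}$ to $\mathbb{R}$ with $f(F)\in F$. Write $r<_f s$ if $f(\{r,s\})=r$ ($r\ne s$), $(\leftarrow,r)_f=\{x: x<_f r\}$, $(r,\rightarrow)_f=\{x: r<_f x\}$. The topology $\tau_f$ on $\mathbb{R}$ is generated by all sets $(\leftarrow,r)_f$, $(r,\rightarrow)_f$, $r\in\mathbb{R}$, and $\mathcal{B}_f(\mathbb{R})$ is the $\sigma$-algebra generated by $\tau_f$. *)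

theory Defs
  imports "HOL-Analysis.Analysis" "HOL-Library.Equipollence"
begin

text \<open>c = 2^{<c}: sup of 2^lambda over cardinals lambda < c is at most c
  (it is always at least c). Cardinals below c are realised by subsets of the reals.\<close>
definition c_eq_two_less_c :: bool where
  "c_eq_two_less_c \<longleftrightarrow>
     (\<forall>A::real set. A \<prec> (UNIV::real set) \<longrightarrow> Pow A \<lesssim> (UNIV::real set))"

definition c_regular :: bool where
  "c_regular \<longleftrightarrow> regularCard (card_of (UNIV::real set))"

definition two_point_selection :: "(real set \<Rightarrow> real) \<Rightarrow> bool" where
  "two_point_selection f \<longleftrightarrow> (\<forall>r s. r \<noteq> s \<longrightarrow> f {r, s} \<in> {r, s})"

definition sel_less :: "(real set \<Rightarrow> real) \<Rightarrow> real \<Rightarrow> real \<Rightarrow> bool" where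
  "sel_less f r s \<longleftrightarrow> r \<noteq> s \<and> f {r, s} = r"

definition sel_topology :: "(real set \<Rightarrow> real) \<Rightarrow> real topology" where
  "sel_topology f = topology_generated_by
     ({{x. sel_less f x r} | r. True} \<union> {{x. sel_less f r x} | r. True})"

definition sel_borel :: "(real set \<Rightarrow> real) \<Rightarrow> real set set" where
  "sel_borel f = sigma_sets UNIV {U. openin (sel_topology f) U}"

end

theory Submission
  imports Defs
begin

text \<open>Each
  \<open>\<B>\<^sub>f\<close> depends only on the relation \<open><\<^sub>f \<subseteq> \<real> \<times> \<real>\<close>, so there are at most 2^c of them.
  For the lower bound identify \<open>\<real>\<close> with \<open>\<real>\<^sup>\<nat>\<close> and, for \<open>B \<subseteq> \<real>\<close>, let \<open>Y\<^sub>B\<close> consist of the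
  sequences one of whose odd-indexed terms codes the trace of \<open>B\<close> on the even-indexed terms.
  Every set in the \<open>\<sigma>\<close>-algebra generated by the countable sets and the \<open>Y\<^sub>A\<close>, \<open>A \<in> \<A>\<close>, is
  decided off a countable set by membership in countably many \<open>Y\<^sub>A\<close>; and for countably many
  \<open>A \<noteq> B\<close> and any countable set \<open>C\<close> there are two sequences outside \<open>C\<close> that agree on
  these \<open>Y\<^sub>A\<close> but not on \<open>Y\<^sub>B\<close>. So \<open>Y\<^sub>B\<close> lies in that \<open>\<sigma>\<close>-algebra only if \<open>B \<in> \<A>\<close>, which
  yields 2^(2^c) distinct \<open>\<sigma>\<close>-algebras containing all countable sets; removing at most 2^c
  of them leaves 2^(2^c).\<close>

lemma infinite_Diff_eqpoll:
  assumes "infinite A" and "B \<prec> A"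
  shows "A - B \<approx> A"
proof (rule lepoll_antisym)
  show "A - B \<lesssim> A"
    by (simp add: subset_imp_lepoll)
  show "A \<lesssim> A - B"
  proof (rule ccontr)
    assume not_le: "\<not> A \<lesssim> A - B"
    obtain M :: "'a set" where M: "A - B \<lesssim> M" "B \<lesssim> M" "M \<prec> A"
    proof (cases "A - B \<lesssim> B")
      case True
      then show ?thesis using that assms(2) by blast
    next
      case False
      then have "B \<lesssim> A - B"
        using ordLeq_total[OF card_of_Well_order card_of_Well_order, of B "A - B"]
        by (auto simp: lepoll_def card_of_ordLeq)
      moreover have "A - B \<prec> A"
        using not_le \<open>A - B \<lesssim> A\<close> eqpoll_imp_lepoll eqpoll_sym lesspoll_def by blast
      ultimately show ?thesis using that by blast
    qed
    have "infinite M"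
    proof
      assume "finite M"
      then have "finite (A - B)" "finite B"
        using M(1,2) inj_on_finite unfolding lepoll_def by blast+
      then show False
        using assms(1) by simp
    qed
    have "A \<lesssim> (A - B) <+> B"
      unfolding lepoll_def
      by (rule exI[of _ "\<lambda>a. if a \<in> B then Inr a else Inl a"]) (auto simp: inj_on_def)
    also have "\<dots> \<lesssim> M <+> M"
      using M(1,2) card_of_Plus_mono by (auto simp: lepoll_def card_of_ordLeq)
    also have "\<dots> \<lesssim> M"
      using card_of_Plus_infinite1[OF \<open>infinite M\<close> ordLeq_refl[OF card_of_Card_order]]
      by (simp add: eqpoll_imp_lepoll eqpoll_iff_card_of_ordIso)
    finally show False
      using M(3) lesspoll_trans1 by blast
  qed
qed

lemma Pow_lepoll_mono: "A \<lesssim> B \<Longrightarrow> Pow A \<lesssim> Pow B"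
  unfolding lepoll_def by (metis image_Pow_mono inj_on_image_Pow)

lemma inj_pair_avoid_countable:
  fixes f :: "'a \<Rightarrow> 'b" and g :: "'a \<Rightarrow> 'c"
  assumes "uncountable (UNIV :: 'a set)" and "inj f" and "inj g"
    and "countable C" and "countable D"
  obtains r where "f r \<notin> C" and "g r \<notin> D"
proof -
  have "countable (f -` C)" "countable (g -` D)"
    using countable_image_inj_Int_vimage[OF assms(2,4)]
      countable_image_inj_Int_vimage[OF assms(3,5)] by simp_all
  then have "\<not> UNIV \<subseteq> f -` C \<union> g -` D"
    using assms(1) by (meson countable_Un countable_subset)
  then show ?thesis
    using that by blast
qed

lemma uncountable_UNIV_nat_set: "uncountable (UNIV :: nat set set)"
  using countable_eqpoll nat_sets_eqpoll_reals eqpoll_sym uncountable_UNIV_real by blast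

lemma uncountable_UNIV_if_inj_nat_set:
  fixes code :: "nat set \<Rightarrow> 'a"
  assumes "inj code"
  shows "uncountable (UNIV :: 'a set)"
proof
  assume "countable (UNIV :: 'a set)"
  then have "countable (range code)"
    by (rule countable_subset[rotated]) simp
  from this assms have "countable (UNIV :: nat set set)"
    by (rule countable_image_inj_on)
  then show False
    using uncountable_UNIV_nat_set by simp
qed

definition real_of_nat_set :: "nat set \<Rightarrow> real" where
  "real_of_nat_set = (SOME g. inj g)"

lemma inj_real_of_nat_set: "inj real_of_nat_set"
  unfolding real_of_nat_set_def
  by (rule someI_ex[of inj]) (meson bij_betw_def eqpoll_def nat_sets_eqpoll_reals)

lemma real_sequences_lepoll_reals: "(UNIV :: (nat \<Rightarrow> real) set) \<lesssim> (UNIV :: real set)"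
proof -
  obtain g :: "real \<Rightarrow> nat set" where g: "inj g"
    by (meson bij_betw_def eqpoll_def eqpoll_sym nat_sets_eqpoll_reals)
  let ?code = "\<lambda>h. real_of_nat_set {prod_encode (n, m) | n m. m \<in> g (h n)}"
  have "inj ?code"
  proof (rule injI)
    fix h h' :: "nat \<Rightarrow> real"
    assume "?code h = ?code h'"
    then have codes: "{prod_encode (n, m) | n m. m \<in> g (h n)} = {prod_encode (n, m) | n m. m \<in> g (h' n)}"
      using inj_real_of_nat_set by (simp add: inj_eq)
    have "g (h n) = g (h' n)" for n
      using codes[THEN eqset_imp_iff, of "prod_encode (n, _)"] by auto
    then show "h = h'"
      using g by (simp add: inj_eq fun_eq_iff)
  qed
  then show ?thesis
    unfolding lepoll_def by blast
qed

definition real_of_seq :: "(nat \<Rightarrow> real) \<Rightarrow> real" where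
  "real_of_seq = (SOME g. inj g)"

lemma inj_real_of_seq: "inj real_of_seq"
  unfolding real_of_seq_def
  by (rule someI_ex[of inj]) (use real_sequences_lepoll_reals in \<open>auto simp: lepoll_def\<close>)

lemma real_pairs_lepoll_reals: "(UNIV :: (real \<times> real) set) \<lesssim> (UNIV :: real set)"
proof -
  have "inj (\<lambda>(x, y). real_of_seq (case_nat x (\<lambda>_. y)))"
  proof (rule injI, clarify)
    fix x y x' y' :: real
    assume "real_of_seq (case_nat x (\<lambda>_. y)) = real_of_seq (case_nat x' (\<lambda>_. y'))"
    then have "case_nat x (\<lambda>_. y) = case_nat x' (\<lambda>_. y')"
      using inj_real_of_seq by (simp add: inj_eq)
    from fun_cong[OF this, of 0] fun_cong[OF this, of 1] show "x = x' \<and> y = y'"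
      by simp
  qed
  then show ?thesis
    unfolding lepoll_def by blast
qed

lemma range_sel_borel_lepoll: "range sel_borel \<lesssim> (UNIV :: real set set)"
proof -
  define borel_of :: "(real \<times> real) set \<Rightarrow> real set set" where
    "borel_of R = sigma_sets UNIV {U. openin (topology_generated_by
       ({{x. (x, r) \<in> R} | r. True} \<union> {{x. (r, x) \<in> R} | r. True})) U}" for R
  have "sel_borel f = borel_of {(x, y). sel_less f x y}" for f
    by (simp add: borel_of_def sel_borel_def sel_topology_def)
  then have "range sel_borel \<lesssim> (UNIV :: (real \<times> real) set set)"
    by (intro subset_image_lepoll[of _ borel_of]) auto
  also have "\<dots> \<lesssim> (UNIV :: real set set)"
    using Pow_lepoll_mono[OF real_pairs_lepoll_reals] by simp
  finally show ?thesis .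
qed

definition countably_determined :: "('i \<Rightarrow> 'a set) \<Rightarrow> 'i set \<Rightarrow> 'a set \<Rightarrow> bool" where
  "countably_determined Y I S \<longleftrightarrow> (\<exists>J C. countable J \<and> J \<subseteq> I \<and> countable C \<and>
     (\<forall>x y. x \<notin> C \<longrightarrow> y \<notin> C \<longrightarrow> (\<forall>i\<in>J. x \<in> Y i \<longleftrightarrow> y \<in> Y i) \<longrightarrow> (x \<in> S \<longleftrightarrow> y \<in> S)))"

lemma countably_determined_countable: "countable S \<Longrightarrow> countably_determined Y I S"
  unfolding countably_determined_def by (intro exI[of _ "{}"] exI[of _ S]) auto

lemma countably_determined_generator: "i \<in> I \<Longrightarrow> countably_determined Y I (Y i)"
  unfolding countably_determined_def by (intro exI[of _ "{i}"] exI[of _ "{}"]) auto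

lemma countably_determined_Compl:
  "countably_determined Y I S \<Longrightarrow> countably_determined Y I (- S)"
  unfolding countably_determined_def Compl_iff by blast

lemma countably_determined_UN:
  assumes "\<And>n::nat. countably_determined Y I (S n)"
  shows "countably_determined Y I (\<Union>n. S n)"
proof -
  define decided_by where "decided_by n J C \<longleftrightarrow> countable J \<and> J \<subseteq> I \<and> countable C \<and>
    (\<forall>x y. x \<notin> C \<longrightarrow> y \<notin> C \<longrightarrow> (\<forall>i\<in>J. x \<in> Y i \<longleftrightarrow> y \<in> Y i) \<longrightarrow> (x \<in> S n \<longleftrightarrow> y \<in> S n))"
    for n J C
  have "\<forall>n. \<exists>J C. decided_by n J C"
    using assms unfolding countably_determined_def decided_by_def by blast
  then obtain J C where JC: "\<And>n. decided_by n (J n) (C n)"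
    by metis
  then have J: "countable (J n)" "J n \<subseteq> I" and C: "countable (C n)" for n
    unfolding decided_by_def by simp_all
  have decides: "x \<in> S n \<longleftrightarrow> y \<in> S n"
    if "x \<notin> C n" "y \<notin> C n" "\<forall>i\<in>J n. x \<in> Y i \<longleftrightarrow> y \<in> Y i" for n x y
    using JC[of n] that unfolding decided_by_def by blast
  show ?thesis
    unfolding countably_determined_def
  proof (intro exI[of _ "\<Union>n. J n"] exI[of _ "\<Union>n. C n"] conjI allI impI)
    fix x y
    assume "x \<notin> (\<Union>n. C n)" "y \<notin> (\<Union>n. C n)" "\<forall>i\<in>(\<Union>n. J n). x \<in> Y i \<longleftrightarrow> y \<in> Y i"
    then have "x \<in> S n \<longleftrightarrow> y \<in> S n" for n
      by (intro decides) auto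
    then show "x \<in> (\<Union>n. S n) \<longleftrightarrow> y \<in> (\<Union>n. S n)"
      by blast
  qed (use J C in auto)
qed

lemma sigma_sets_countably_determined:
  "S \<in> sigma_sets UNIV ({A. countable A} \<union> Y ` I) \<Longrightarrow> countably_determined Y I S"
proof (induction rule: sigma_sets.induct)
  case (Basic S)
  then consider "countable S" | i where "i \<in> I" "S = Y i"
    by auto
  then show ?case
    by cases (simp_all add: countably_determined_countable countably_determined_generator)
next
  case Empty
  show ?case
    by (simp add: countably_determined_countable)
next
  case (Compl S)
  show ?case
    using countably_determined_Compl[OF Compl.IH] unfolding Compl_eq_Diff_UNIV .
next
  case (Union S)
  show ?case
    using Union.IH by (rule countably_determined_UN)
qed

lemma enumerate_separated_from:
  fixes B :: "'a set"
  assumes "countable J" and "B \<notin> J"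
  obtains a :: "nat \<Rightarrow> 'a set" and w where "J \<subseteq> range a" and "\<And>n. w n \<in> B \<longleftrightarrow> w n \<notin> a n"
proof -
  \<comment> \<open>\<open>- B\<close> only makes the enumerated set nonempty; it differs from \<open>B\<close> as well.\<close>
  define a where "a = from_nat_into (insert (- B) J)"
  have range_a: "range a = insert (- B) J"
    unfolding a_def using assms(1) by simp
  have "- B \<noteq> B"
    by (metis Compl_iff)
  then have "a n \<noteq> B" for n
    using assms(2) range_a by (metis insertE rangeI)
  then have "\<exists>x. x \<in> B \<longleftrightarrow> x \<notin> a n" for n
    by (metis set_eqI)
  then obtain w where "\<And>n. w n \<in> B \<longleftrightarrow> w n \<notin> a n"
    by metis
  moreover have "J \<subseteq> range a"
    using range_a by blast
  ultimately show ?thesis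
    using that by blast
qed

definition coded_trace_set :: "(nat set \<Rightarrow> 'a) \<Rightarrow> 'a set \<Rightarrow> (nat \<Rightarrow> 'a) set" where
  "coded_trace_set code B = {p. \<exists>k. p (2 * k + 1) = code {n. p (2 * n) \<in> B}}"

definition interleave_traces :: "(nat set \<Rightarrow> 'a) \<Rightarrow> (nat \<Rightarrow> 'a) \<Rightarrow> (nat \<Rightarrow> 'a set) \<Rightarrow> nat \<Rightarrow> 'a"
  where "interleave_traces code e F i =
    (if even i then e (i div 2) else code {n. e n \<in> F (i div 2)})"

lemma interleave_traces_mem_coded_trace_set_iff:
  assumes "inj code"
  shows "interleave_traces code e F \<in> coded_trace_set code A \<longleftrightarrow>
    (\<exists>k. {n. e n \<in> F k} = {n. e n \<in> A})"
proof -
  have "interleave_traces code e F (2 * n) = e n" for n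
    by (simp add: interleave_traces_def)
  moreover have "interleave_traces code e F (2 * k + 1) = code {n. e n \<in> F k}" for k
    by (simp add: interleave_traces_def)
  ultimately show ?thesis
    unfolding coded_trace_set_def mem_Collect_eq by (simp only: inj_eq[OF assms])
qed

lemma coded_trace_set_separation:
  fixes code :: "nat set \<Rightarrow> 'a"
  assumes "inj code" and "countable J" and "B \<notin> J" and "countable C"
  obtains p q where "p \<notin> C" and "q \<notin> C"
    and "\<And>A. A \<in> J \<Longrightarrow> p \<in> coded_trace_set code A \<longleftrightarrow> q \<in> coded_trace_set code A"
    and "p \<in> coded_trace_set code B" and "q \<notin> coded_trace_set code B"
proof -
  let ?T = "coded_trace_set code"
  obtain a :: "nat \<Rightarrow> 'a set" and w :: "nat \<Rightarrow> 'a"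
    where range_a: "J \<subseteq> range a" and w: "\<And>n. w n \<in> B \<longleftrightarrow> w n \<notin> a n"
    using enumerate_separated_from[OF assms(2,3)] by blast
  \<comment> \<open>Both sequences list \<open>r, w 0, w 1, \<dots>\<close> at even positions; at odd positions \<open>p\<close> codes the
    traces of \<open>B, a 0, a 1, \<dots>\<close> and \<open>q\<close> those of \<open>a 0, a 1, \<dots>\<close>, none of which equals the trace
    of \<open>B\<close> because \<open>w k\<close> separates \<open>B\<close> from \<open>a k\<close>.\<close>
  define p where "p r = interleave_traces code (case_nat r w) (case_nat B a)" for r
  define q where "q r = interleave_traces code (case_nat r w) a" for r
  have agree: "p r \<in> ?T A \<and> q r \<in> ?T A" if "A \<in> J" for r A
  proof -
    have "A \<in> range a"
      using range_a that by blast
    then obtain k where "A = a k"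
      by blast
    then show ?thesis
      unfolding p_def q_def interleave_traces_mem_coded_trace_set_iff[OF assms(1)]
      by (intro conjI exI[of _ "Suc k"] exI[of _ k]) simp_all
  qed
  have p_in: "p r \<in> ?T B" for r
    unfolding p_def interleave_traces_mem_coded_trace_set_iff[OF assms(1)]
    by (intro exI[of _ 0]) simp
  have q_notin: "q r \<notin> ?T B" for r
  proof -
    have "{n. case_nat r w n \<in> a k} \<noteq> {n. case_nat r w n \<in> B}" for k
    proof
      assume "{n. case_nat r w n \<in> a k} = {n. case_nat r w n \<in> B}"
      then have "w k \<in> a k \<longleftrightarrow> w k \<in> B"
        by (metis (mono_tags) mem_Collect_eq nat.case(2))
      then show False
        using w[of k] by simp
    qed
    then show ?thesis
      unfolding q_def interleave_traces_mem_coded_trace_set_iff[OF assms(1)] by simp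
  qed
  have "p r 0 = r" "q r 0 = r" for r
    by (simp_all add: p_def q_def interleave_traces_def)
  then have "inj p" "inj q"
    by (auto intro: inj_on_inverseI[where g = "\<lambda>s. s 0"])
  then obtain r where "p r \<notin> C" "q r \<notin> C"
    using inj_pair_avoid_countable[OF uncountable_UNIV_if_inj_nat_set[OF assms(1)] _ _ assms(4,4)]
    by blast
  then show ?thesis
    by (rule that) (simp_all add: agree p_in q_notin)
qed

definition real_trace_set :: "real set \<Rightarrow> real set" where
  "real_trace_set B = real_of_seq ` coded_trace_set real_of_nat_set B"

definition trace_sigma :: "real set set \<Rightarrow> real set set" where
  "trace_sigma \<A> = sigma_sets UNIV ({A. countable A} \<union> real_trace_set ` \<A>)"

lemma real_trace_set_mem_trace_sigma_iff: "real_trace_set B \<in> trace_sigma \<A> \<longleftrightarrow> B \<in> \<A>"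
proof
  assume "B \<in> \<A>"
  then show "real_trace_set B \<in> trace_sigma \<A>"
    unfolding trace_sigma_def by auto
next
  assume "real_trace_set B \<in> trace_sigma \<A>"
  then have "countably_determined real_trace_set \<A> (real_trace_set B)"
    unfolding trace_sigma_def by (rule sigma_sets_countably_determined)
  then obtain J C where J: "countable J" "J \<subseteq> \<A>" and "countable C"
    and decides: "\<forall>x y. x \<notin> C \<longrightarrow> y \<notin> C \<longrightarrow>
      (\<forall>A\<in>J. x \<in> real_trace_set A \<longleftrightarrow> y \<in> real_trace_set A) \<longrightarrow>
      (x \<in> real_trace_set B \<longleftrightarrow> y \<in> real_trace_set B)"
    unfolding countably_determined_def by blast
  have mem: "real_of_seq p \<in> real_trace_set A \<longleftrightarrow> p \<in> coded_trace_set real_of_nat_set A" for p A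
    unfolding real_trace_set_def using inj_real_of_seq by (rule inj_image_mem_iff)
  have "countable (real_of_seq -` C)"
    using countable_image_inj_Int_vimage[OF inj_real_of_seq \<open>countable C\<close>] by simp
  show "B \<in> \<A>"
  proof (rule ccontr)
    assume "B \<notin> \<A>"
    with J have "B \<notin> J"
      by blast
    obtain p q where p: "p \<notin> real_of_seq -` C" and q: "q \<notin> real_of_seq -` C"
      and agree: "\<And>A. A \<in> J \<Longrightarrow>
        p \<in> coded_trace_set real_of_nat_set A \<longleftrightarrow> q \<in> coded_trace_set real_of_nat_set A"
      and pB: "p \<in> coded_trace_set real_of_nat_set B"
      and qB: "q \<notin> coded_trace_set real_of_nat_set B"
      by (rule coded_trace_set_separation[OF inj_real_of_nat_set \<open>countable J\<close> \<open>B \<notin> J\<close>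
            \<open>countable (real_of_seq -` C)\<close>]) blast
    have "real_of_seq p \<in> real_trace_set B \<longleftrightarrow> real_of_seq q \<in> real_trace_set B"
      using p q agree by (intro decides[rule_format]) (simp_all add: mem)
    with pB qB show False
      by (simp add: mem)
  qed
qed

lemma inj_trace_sigma: "inj trace_sigma"
  by (rule injI) (use real_trace_set_mem_trace_sigma_iff in blast)

theorem corollary3p11:
  assumes "c_eq_two_less_c"
    and "c_regular"
  shows "{\<Sigma>. sigma_algebra (UNIV::real set) \<Sigma> \<and> {A::real set. countable A} \<subseteq> \<Sigma> \<and>
             (\<forall>f. two_point_selection f \<longrightarrow> \<Sigma> \<noteq> sel_borel f)}
         \<approx> Pow (Pow (UNIV::real set))"
  (is "?Tgt \<approx> ?U")
proof -
  have sigmas: "range trace_sigma \<approx> ?U"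
    using inj_on_image_eqpoll_self[OF inj_trace_sigma] by simp
  have "infinite ?U"
    by (simp only: finite_Pow_iff) (simp add: infinite_UNIV_char_0)
  with sigmas have "infinite (range trace_sigma)"
    using eqpoll_finite_iff by blast
  moreover have "range sel_borel \<prec> range trace_sigma"
    using lesspoll_trans1[OF range_sel_borel_lepoll lesspoll_Pow_self] sigmas
    by (simp add: lesspoll_eq_trans eqpoll_sym)
  ultimately have "range trace_sigma - range sel_borel \<approx> range trace_sigma"
    by (rule infinite_Diff_eqpoll)
  also note sigmas
  finally have "?U \<lesssim> range trace_sigma - range sel_borel"
    by (simp add: eqpoll_imp_lepoll eqpoll_sym)
  also have "\<dots> \<lesssim> ?Tgt"
    unfolding trace_sigma_def
    by (rule subset_imp_lepoll) (auto intro: sigma_algebra_sigma_sets)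
  finally have "?U \<lesssim> ?Tgt" .
  moreover have "?Tgt \<lesssim> ?U"
    by (rule subset_imp_lepoll) auto
  ultimately show ?thesis
    by (simp add: lepoll_antisym)
qed

end
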